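(* Let $r_1,r_2\in(0,1)$, $a_1,a_2\in(1,\infty)$, and for $i=1,2$ let $l_i$ be Lebesgue measurable, integrable, with $\int_{\mathbb{R}}l_i=1$, $\int_{\mathbb{R}}l_i(y)e^{\lambda y}dy<\infty$ for all $\lambda\in\mathbb{R}$, and $l_i(y)=l_i(-y)\ge0$. Define $Q=(Q_1,Q_2)$ on $\mathcal{C}_{[\theta,\mathbf{1}]}$ by \[ Q_1(\phi,\psi)(t)=1-\int_{\mathbb{R}}(1-\phi (y))e^{r_{1}(\phi (y)-a_{1}\psi(y))}l_{1}(t-y)\,dy,\quad Q_2(\phi,\psi)(t)=\int_{\mathbb{R}} \psi (y)e^{r_{2}(1-a_2-\psi (y)+a_{2}\phi (y))}l_{2}(t-y)\,dy. \] Then $Q$ maps $\mathcal{C}_{[\theta,\mathbf{1}]}$ into $\mathcal{C}_{[\theta,\mathbf{1}]}$, and: (i) $Q:\mathcal{C}_{[\theta,\mathbf{1}]}\to\mathcal{C}_{[\theta,\mathbf{1}]}$ is continuous with respect to the compact-open topology; (ii) $Q$ is order preserving, i.e. $Q[\Phi]\ge Q[\Psi]$ whenever $\Phi\ge\Psi$ with $\Phi,\Psi\in\mathcal{C}_{[\theta,\mathbf{1}]}$; (iii) $Q:\mathcal{C}_{[\theta,\mathbf{1}]}\to\mathcal{C}_{[\theta,\mathbf{1}]}$ is compact with respect to the compact-open topology.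
   Context: $\mathcal{C}$ is the space of uniformly continuous bounded functions $\mathbb{R}\to\mathbb{R}^2$, with the compact-open topology (convergence uniform on compact subsets) and the componentwise pointwise order; $\mathcal{C}_{[\theta,\mathbf{1}]}=\{U\in\mathcal{C}: (0,0)\le U(x)\le (1,1)\ \forall x\}$. *)

theory Defs
  imports "HOL-Analysis.Analysis"
begin

definition UCB :: "(real \<Rightarrow> real \<times> real) set" where
  "UCB = {U. uniformly_continuous_on UNIV U \<and> bounded (range U)}"

definition C01 :: "(real \<Rightarrow> real \<times> real) set" where
  "C01 = {U \<in> UCB. \<forall>x. 0 \<le> fst (U x) \<and> fst (U x) \<le> 1 \<and> 0 \<le> snd (U x) \<and> snd (U x) \<le> 1}"

definition fle :: "(real \<Rightarrow> real \<times> real) \<Rightarrow> (real \<Rightarrow> real \<times> real) \<Rightarrow> bool" where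
  "fle U V \<longleftrightarrow> (\<forall>x. fst (U x) \<le> fst (V x) \<and> snd (U x) \<le> snd (V x))"

definition compact_open :: "(real \<Rightarrow> real \<times> real) topology" where
  "compact_open = topology (\<lambda>S. S \<subseteq> UCB \<and>
     (\<forall>f\<in>S. \<exists>K e. compact K \<and> e > 0 \<and>
        {g \<in> UCB. \<forall>x\<in>K. dist (g x) (f x) < e} \<subseteq> S))"

definition Qmap :: "real \<Rightarrow> real \<Rightarrow> real \<Rightarrow> real \<Rightarrow> (real \<Rightarrow> real) \<Rightarrow> (real \<Rightarrow> real)
    \<Rightarrow> (real \<Rightarrow> real \<times> real) \<Rightarrow> (real \<Rightarrow> real \<times> real)" where
  "Qmap r1 r2 a1 a2 l1 l2 U = (\<lambda>t.
     (1 - (LINT y|lebesgue. (1 - fst (U y)) * exp (r1 * (fst (U y) - a1 * snd (U y))) * l1 (t - y)),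
      (LINT y|lebesgue. snd (U y) * exp (r2 * (1 - a2 - snd (U y) + a2 * fst (U y))) * l2 (t - y))))"

definition kernel :: "(real \<Rightarrow> real) \<Rightarrow> bool" where
  "kernel l \<longleftrightarrow> l \<in> borel_measurable lebesgue \<and> integrable lebesgue l \<and>
     (LINT y|lebesgue. l y) = 1 \<and>
     (\<forall>c::real. integrable lebesgue (\<lambda>y. l y * exp (c * y))) \<and>
     (\<forall>y. l y = l (- y) \<and> 0 \<le> l y)"

end

theory Submission
  imports Defs "HOL-Complex_Analysis.Great_Picard"
begin

text \<open>
  Both components of Q are convolutions of a kernel with a nonlinearity applied to U:
  Q_1 = 1 - l_1 * G_1(U) and Q_2 = l_2 * G_2(U), where G_1(u, v) = (1 - u) e^(r_1 (u - a_1 v)) and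
  G_2(u, v) = v e^(r_2 (1 - a_2 - v + a_2 u)). Since r_i < 1, the function u |-> (1 - u) e^(r u) is
  nonincreasing on [0, 1], so on the unit square G_1 is antitone and G_2 is monotone, both with
  values in [0, 1]; this gives invariance of C_[0,1] and monotonicity of Q.

  Continuity of translation in L^1 gives every Q[U] the same modulus of continuity
  h |-> ||l_1(. + h) - l_1||_1 + ||l_2(. + h) - l_2||_1. The compact-open topology is induced by the
  metric sup_x min(1, |f x - g x|) / (1 + |x|), in which a family of maps into the unit square with a
  common modulus of continuity is compact (Arzela-Ascoli); hence Q[C_[0,1]] has compact closure.
  Finally the kernels have small tails and G_i is uniformly continuous on the unit square, so up to
  any epsilon the value Q[U](t) only depends on U on a bounded window around t; this gives continuity.
\<close>

section \<open>Continuity of translation in $L^1$\<close>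

lemma integral_translate_real:
  fixes f :: "real \<Rightarrow> 'a::euclidean_space"
  shows "(LINT x|lebesgue. f (x + h)) = (LINT x|lebesgue. f x)"
  using lebesgue_integral_real_affine[of 1 f h] by (simp add: add.commute)

lemma integrable_translate_real:
  fixes f :: "real \<Rightarrow> 'a::euclidean_space"
  assumes "integrable lebesgue f"
  shows "integrable lebesgue (\<lambda>x. f (x + h))"
  using lebesgue_integrable_real_affine[OF assms, of 1 h] by (simp add: add.commute)

lemma integral_reflect_real:
  fixes f :: "real \<Rightarrow> 'a::euclidean_space"
  shows "(LINT y|lebesgue. f (t - y)) = (LINT x|lebesgue. f x)"
  using lebesgue_integral_real_affine[of "-1" f t] by simp

lemma integrable_reflect_real:
  fixes f :: "real \<Rightarrow> 'a::euclidean_space"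
  assumes "integrable lebesgue f"
  shows "integrable lebesgue (\<lambda>y. f (t - y))"
  using lebesgue_integrable_real_affine[OF assms, of "-1" t] by simp

text \<open>Only an upper bound is imposed; the moduli below are nonnegative.\<close>
definition vanishes_at_0 :: "(real \<Rightarrow> real) \<Rightarrow> bool" where
  "vanishes_at_0 T \<longleftrightarrow> (\<forall>e>0. \<exists>d>0. \<forall>h. \<bar>h\<bar> < d \<longrightarrow> T h < e)"

lemma vanishes_at_0D:
  assumes "vanishes_at_0 T" "e > 0"
  obtains d where "d > 0" "\<And>h. \<bar>h\<bar> < d \<Longrightarrow> T h < e"
  using assms unfolding vanishes_at_0_def by blast

lemma vanishes_at_0_approx:
  assumes "\<And>e. e > 0 \<Longrightarrow> \<exists>S. vanishes_at_0 S \<and> (\<forall>h. T h \<le> S h + e)"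
  shows "vanishes_at_0 T"
  unfolding vanishes_at_0_def
proof (intro allI impI)
  fix e :: real assume "e > 0"
  then obtain S where S: "vanishes_at_0 S" "\<And>h. T h \<le> S h + e/2"
    using assms[of "e/2"] by auto
  obtain d where "d > 0" "\<And>h. \<bar>h\<bar> < d \<Longrightarrow> S h < e/2"
    using vanishes_at_0D[OF S(1), of "e/2"] \<open>e > 0\<close> by auto
  then show "\<exists>d>0. \<forall>h. \<bar>h\<bar> < d \<longrightarrow> T h < e"
    using S(2) by (metis add_less_cancel_right field_sum_of_halves order_le_less_trans)
qed

lemma vanishes_at_0_mono:
  assumes "vanishes_at_0 T" "\<And>h. S h \<le> T h"
  shows "vanishes_at_0 S"
proof (rule vanishes_at_0_approx)
  fix e :: real assume "e > 0"
  then show "\<exists>T'. vanishes_at_0 T' \<and> (\<forall>h. S h \<le> T' h + e)"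
    using assms by (intro exI[of _ T]) (simp add: add_increasing2 less_imp_le)
qed

lemma vanishes_at_0_add:
  assumes "vanishes_at_0 S" "vanishes_at_0 T"
  shows "vanishes_at_0 (\<lambda>h. S h + T h)"
  unfolding vanishes_at_0_def
proof (intro allI impI)
  fix e :: real assume "e > 0"
  then have "e/2 > 0" by simp
  obtain d1 where d1: "d1 > 0" "\<And>h. \<bar>h\<bar> < d1 \<Longrightarrow> S h < e/2"
    using vanishes_at_0D[OF assms(1) \<open>e/2 > 0\<close>] by blast
  obtain d2 where d2: "d2 > 0" "\<And>h. \<bar>h\<bar> < d2 \<Longrightarrow> T h < e/2"
    using vanishes_at_0D[OF assms(2) \<open>e/2 > 0\<close>] by blast
  have "S h + T h < e" if "\<bar>h\<bar> < min d1 d2" for h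
    using d1(2)[of h] d2(2)[of h] that by simp
  then show "\<exists>d>0. \<forall>h. \<bar>h\<bar> < d \<longrightarrow> S h + T h < e"
    using d1(1) d2(1) by (intro exI[of _ "min d1 d2"]) simp
qed

lemma vanishes_at_0_cmult:
  assumes "vanishes_at_0 T" "c \<ge> 0"
  shows "vanishes_at_0 (\<lambda>h. c * T h)"
proof (cases "c = 0")
  case True
  then show ?thesis by (auto simp: vanishes_at_0_def)
next
  case False
  show ?thesis unfolding vanishes_at_0_def
  proof (intro allI impI)
    fix e :: real assume "e > 0"
    have c: "c > 0" using assms(2) False by simp
    obtain d where d: "d > 0" "\<And>h. \<bar>h\<bar> < d \<Longrightarrow> T h < e / c"
      using vanishes_at_0D[OF assms(1)] \<open>e > 0\<close> c by (metis divide_pos_pos)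
    have "c * T h < e" if "\<bar>h\<bar> < d" for h
      using d(2)[OF that] c by (simp add: pos_less_divide_eq mult.commute)
    then show "\<exists>d>0. \<forall>h. \<bar>h\<bar> < d \<longrightarrow> c * T h < e"
      using d(1) by blast
  qed
qed


definition L1_modulus :: "(real \<Rightarrow> real) \<Rightarrow> real \<Rightarrow> real" where
  "L1_modulus f h = (LINT x|lebesgue. \<bar>f (x + h) - f x\<bar>)"

lemma integrable_translate_diff:
  fixes f :: "real \<Rightarrow> real"
  assumes "integrable lebesgue f"
  shows "integrable lebesgue (\<lambda>x. \<bar>f (x + h) - f x\<bar>)"
  using integrable_translate_real[OF assms, of h] assms by auto

lemma measure_less_if_emeasure_less:
  assumes "S \<in> fmeasurable M" "emeasure M S < ennreal c"
  shows "measure M S < c"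
  using assms by (simp add: emeasure_eq_measure2 ennreal_less_iff)

lemma lmeasurable_inner_compact:
  fixes A :: "'a::euclidean_space set"
  assumes A: "A \<in> lmeasurable" and e: "e > 0"
  obtains K where "compact K" "K \<subseteq> A" "measure lebesgue (A - K) < e"
proof -
  define B where "B n = A \<inter> cball 0 (real n)" for n :: nat
  have B: "B n \<in> lmeasurable" for n
    using A by (simp add: B_def fmeasurable_Int_fmeasurable)
  have UB: "(\<Union>n. B n) = A" by (auto simp: B_def real_arch_simple)
  have "(\<lambda>n. measure lebesgue (B n)) \<longlonglongrightarrow> measure lebesgue (\<Union>n. B n)"
  proof (rule Lim_measure_incseq)
    show "range B \<subseteq> sets lebesgue" "incseq B"
      using B by (auto simp: incseq_def B_def fmeasurableD)
    show "emeasure lebesgue (\<Union>n. B n) \<noteq> \<infinity>"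
      unfolding UB using fmeasurableD2[OF A] by simp
  qed
  then have "\<forall>\<^sub>F n in sequentially. measure lebesgue A - e/2 < measure lebesgue (B n)"
    using e UB by (intro order_tendstoD(1)) auto
  then obtain n where n: "measure lebesgue A - e/2 < measure lebesgue (B n)"
    using eventually_happens'[OF sequentially_bot] by blast
  obtain K where K: "closed K" "K \<subseteq> B n" "B n - K \<in> lmeasurable"
      "emeasure lebesgue (B n - K) < ennreal (e/2)"
    using sets_lebesgue_inner_closed[of "B n" "e/2"] B e by (auto simp: fmeasurableD)
  show thesis
  proof
    show "compact K"
      using K(1,2) bounded_subset[of "cball 0 (real n)" K] by (auto simp: B_def compact_eq_bounded_closed)
    show "K \<subseteq> A" using K(2) by (auto simp: B_def)
    have "A - K = (A - B n) \<union> (B n - K)" using K(2) by (auto simp: B_def)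
    moreover have "A - B n \<in> lmeasurable" using A B by (simp add: fmeasurable_Diff)
    ultimately have "measure lebesgue (A - K) \<le> measure lebesgue (A - B n) + measure lebesgue (B n - K)"
      using K(3) by (simp add: measure_Un_le fmeasurableD)
    moreover have "measure lebesgue (A - B n) = measure lebesgue A - measure lebesgue (B n)"
      using A B by (intro measurable_measure_Diff) (auto simp: B_def fmeasurableD)
    ultimately show "measure lebesgue (A - K) < e"
      using n measure_less_if_emeasure_less[OF K(3,4)] by linarith
  qed
qed

lemma lmeasurable_compact_open_approx:
  fixes A :: "'a::euclidean_space set"
  assumes A: "A \<in> lmeasurable" and e: "e > 0"
  obtains K U where "compact K" "open U" "K \<subseteq> A" "A \<subseteq> U" "U - K \<in> lmeasurable"
    "measure lebesgue (U - K) < e"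
proof -
  obtain K where K: "compact K" "K \<subseteq> A" "measure lebesgue (A - K) < e/2"
    using lmeasurable_inner_compact[OF A, of "e/2"] e by auto
  obtain U where U: "open U" "A \<subseteq> U" "U - A \<in> lmeasurable" "emeasure lebesgue (U - A) < ennreal (e/2)"
    using sets_lebesgue_outer_open[of A "e/2"] A e by (auto simp: fmeasurableD)
  have AK: "A - K \<in> lmeasurable"
    by (intro fmeasurable_Diff A fmeasurableD lmeasurable_compact K(1))
  have "U - K = (U - A) \<union> (A - K)" using U(2) K(2) by auto
  then have "U - K \<in> lmeasurable" "measure lebesgue (U - K) \<le> measure lebesgue (U - A) + measure lebesgue (A - K)"
    using U(3) AK by (auto simp: measure_Un_le fmeasurableD)
  then show thesis
    using that[OF K(1) U(1) K(2) U(2)] K(3) measure_less_if_emeasure_less[OF U(3,4)] by linarith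
qed

lemma vanishes_at_0_L1_modulus_indicator:
  fixes A :: "real set"
  assumes "A \<in> lmeasurable"
  shows "vanishes_at_0 (L1_modulus (indicator A))"
  unfolding vanishes_at_0_def
proof (intro allI impI)
  fix e :: real assume "e > 0"
  then obtain K U where KU: "compact K" "open U" "K \<subseteq> A" "A \<subseteq> U" "U - K \<in> lmeasurable"
    "measure lebesgue (U - K) < e/2"
    using lmeasurable_compact_open_approx[OF assms, of "e/2"] by auto
  obtain d where d: "d > 0" "(\<Union>x\<in>K. ball x d) \<subseteq> U"
    using compact_subset_open_imp_ball_epsilon_subset[OF KU(1,2)] KU(3,4) by blast
  have "L1_modulus (indicator A) h < e" if h: "\<bar>h\<bar> < d" for h
  proof -
    have near: "x \<in> U" if "y \<in> K" "\<bar>x - y\<bar> < d" for x y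
      using d(2) that by (force simp: dist_real_def)
    \<comment> \<open>A point where the indicator of A jumps under the shift lies in U - K before or after the shift.\<close>
    have jump: "\<bar>indicator A (x + h) - indicator A x :: real\<bar>
        \<le> indicator (U - K) (x + h) + indicator (U - K) x" for x
      using near[of "x + h" x] near[of x "x + h"] h KU(3,4) by (auto simp: indicator_def)
    have i: "integrable lebesgue (indicator (U - K) :: real \<Rightarrow> real)"
      using KU(5) by (simp add: lmeasurable_iff_integrable)
    have "L1_modulus (indicator A) h
        \<le> (LINT x|lebesgue. indicator (U - K) (x + h) + indicator (U - K) x :: real)"
      unfolding L1_modulus_def using jump
      by (intro integral_mono' Bochner_Integration.integrable_add integrable_translate_real i) auto
    also have "\<dots> = 2 * measure lebesgue (U - K)"
      using i integrable_translate_real[OF i, of h] integral_translate_real[of "indicator (U - K) :: real \<Rightarrow> real" h]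
      by simp
    finally show ?thesis using KU(6) by linarith
  qed
  then show "\<exists>d>0. \<forall>h. \<bar>h\<bar> < d \<longrightarrow> L1_modulus (indicator A) h < e"
    using d(1) by blast
qed

lemma L1_modulus_add_le:
  fixes f g :: "real \<Rightarrow> real"
  assumes "integrable lebesgue f" "integrable lebesgue g"
  shows "L1_modulus (\<lambda>x. f x + g x) h \<le> L1_modulus f h + L1_modulus g h"
proof -
  have i: "integrable lebesgue (\<lambda>x. \<bar>f (x + h) - f x\<bar>)" "integrable lebesgue (\<lambda>x. \<bar>g (x + h) - g x\<bar>)"
    using assms by (auto intro: integrable_translate_diff)
  have "L1_modulus (\<lambda>x. f x + g x) h \<le> (LINT x|lebesgue. \<bar>f (x + h) - f x\<bar> + \<bar>g (x + h) - g x\<bar>)"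
    unfolding L1_modulus_def using i by (intro integral_mono') auto
  then show ?thesis unfolding L1_modulus_def using i by simp
qed

lemma L1_modulus_le_approx:
  fixes f g :: "real \<Rightarrow> real"
  assumes f: "integrable lebesgue f" and g: "integrable lebesgue g"
  shows "L1_modulus f h \<le> L1_modulus g h + 2 * (LINT x|lebesgue. \<bar>g x - f x\<bar>)"
proof -
  have d: "integrable lebesgue (\<lambda>x. \<bar>g x - f x\<bar>)" using f g by auto
  have "L1_modulus f h
      \<le> (LINT x|lebesgue. \<bar>g (x + h) - f (x + h)\<bar> + \<bar>g (x + h) - g x\<bar> + \<bar>g x - f x\<bar>)"
    unfolding L1_modulus_def
    using integrable_translate_real[OF d, of h] integrable_translate_diff[OF g, of h] d
    by (intro integral_mono') auto
  also have "\<dots> = L1_modulus g h + 2 * (LINT x|lebesgue. \<bar>g x - f x\<bar>)"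
    unfolding L1_modulus_def
    using integrable_translate_real[OF d, of h] integrable_translate_diff[OF g, of h] d
      integral_translate_real[of "\<lambda>x. \<bar>g x - f x\<bar>" h]
    by simp
  finally show ?thesis .
qed

lemma vanishes_at_0_L1_modulus:
  fixes f :: "real \<Rightarrow> real"
  assumes "integrable lebesgue f"
  shows "vanishes_at_0 (L1_modulus f)"
  using assms
proof (induct rule: integrable_induct)
  case (base A c)
  have "A \<in> lmeasurable" using base by (intro fmeasurableI) auto
  then have "vanishes_at_0 (\<lambda>h. \<bar>c\<bar> * L1_modulus (indicator A) h)"
    by (intro vanishes_at_0_cmult vanishes_at_0_L1_modulus_indicator) auto
  moreover have "\<bar>indicator A (x + h) * c - indicator A x * c\<bar> = \<bar>c\<bar> * \<bar>indicator A (x + h) - indicator A x\<bar>"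
    for x h :: real
    by (metis abs_mult left_diff_distrib mult.commute)
  then have "L1_modulus (\<lambda>x. indicator A x *\<^sub>R c) h = \<bar>c\<bar> * L1_modulus (indicator A) h" for h
    by (simp add: L1_modulus_def)
  ultimately show ?case by simp
next
  case (add f g)
  then show ?case
    by (intro vanishes_at_0_mono[OF vanishes_at_0_add L1_modulus_add_le]) auto
next
  case (lim f s)
  have "AE x in lebesgue. (\<lambda>i. \<bar>s i x - f x\<bar>) \<longlonglongrightarrow> 0"
    using lim(3) by (intro AE_I2) (simp add: LIM_zero tendsto_rabs_zero)
  moreover have "AE x in lebesgue. norm \<bar>s i x - f x\<bar> \<le> 3 * \<bar>f x\<bar>" for i
  proof (rule AE_I2)
    fix x :: real assume "x \<in> space lebesgue"
    then have "\<bar>s i x\<bar> \<le> 2 * \<bar>f x\<bar>" using lim(4) by simp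
    then show "norm \<bar>s i x - f x\<bar> \<le> 3 * \<bar>f x\<bar>" by simp
  qed
  moreover have "(\<lambda>x. \<bar>s i x - f x\<bar>) \<in> borel_measurable lebesgue" for i
    using lim(1,5) by (intro borel_measurable_abs borel_measurable_diff borel_measurable_integrable)
  ultimately have "(\<lambda>i. LINT x|lebesgue. \<bar>s i x - f x\<bar>) \<longlonglongrightarrow> 0"
    using integral_dominated_convergence[of "\<lambda>x. 0" lebesgue "\<lambda>i x. \<bar>s i x - f x\<bar>" "\<lambda>x. 3 * \<bar>f x\<bar>"]
      lim(5) by simp
  then have approx: "\<exists>i. (LINT x|lebesgue. \<bar>s i x - f x\<bar>) < e/2" if "e > 0" for e :: real
    using that order_tendstoD(2)[of _ 0 sequentially "e/2"] eventually_happens'[OF sequentially_bot] by auto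
  show ?case
  proof (rule vanishes_at_0_approx)
    fix e :: real assume "e > 0"
    then obtain i where i: "(LINT x|lebesgue. \<bar>s i x - f x\<bar>) < e/2" using approx by blast
    have "L1_modulus f h \<le> L1_modulus (s i) h + e" for h
      using L1_modulus_le_approx[OF lim(5,1), of h i] i by linarith
    then show "\<exists>S. vanishes_at_0 S \<and> (\<forall>h. L1_modulus f h \<le> S h + e)"
      using lim(2)[of i] by blast
  qed
qed

section \<open>A metric for the compact-open topology\<close>

definition decay :: "real \<Rightarrow> real" where
  "decay x = 1 / (1 + \<bar>x\<bar>)"

definition co_dist :: "(real \<Rightarrow> 'a::metric_space) \<Rightarrow> (real \<Rightarrow> 'a) \<Rightarrow> real" where
  "co_dist f g = (SUP x. decay x * min 1 (dist (f x) (g x)))"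

lemma decay_pos: "decay x > 0"
  and decay_le_1: "decay x \<le> 1"
  by (auto simp: decay_def)

lemma decay_antimono: "\<bar>x\<bar> \<le> \<bar>y\<bar> \<Longrightarrow> decay y \<le> decay x"
  by (auto simp: decay_def intro!: divide_left_mono)

lemma decay_less: "e > 0 \<Longrightarrow> decay (2 / e) < e"
  by (auto simp: decay_def field_simps add_pos_pos)

lemma co_dist_bdd_above: "bdd_above (range (\<lambda>x. decay x * min 1 (dist (f x) (g x))))"
proof (rule bdd_aboveI2)
  show "decay x * min 1 (dist (f x) (g x)) \<le> 1" for x
    using decay_pos[of x] decay_le_1[of x] by (intro mult_le_one) auto
qed

lemma co_dist_ge: "decay x * min 1 (dist (f x) (g x)) \<le> co_dist f g"
  unfolding co_dist_def by (rule cSUP_upper[OF _ co_dist_bdd_above]) simp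

lemma co_dist_le: "(\<And>x. decay x * min 1 (dist (f x) (g x)) \<le> c) \<Longrightarrow> co_dist f g \<le> c"
  unfolding co_dist_def by (rule cSUP_least) auto

lemma co_dist_nonneg: "0 \<le> co_dist f g"
  using co_dist_ge[of 0 f g] decay_pos[of 0] by (smt (verit) mult_nonneg_nonneg zero_le_dist)

lemma co_dist_commute: "co_dist f g = co_dist g f"
  unfolding co_dist_def by (simp add: dist_commute)

lemma co_dist_eq_0_iff: "co_dist f g = 0 \<longleftrightarrow> f = g"
proof
  assume 0: "co_dist f g = 0"
  show "f = g"
  proof
    fix x
    have "decay x * min 1 (dist (f x) (g x)) \<le> 0" using co_dist_ge[of x f g] 0 by simp
    then have "min 1 (dist (f x) (g x)) \<le> 0"
      using decay_pos[of x] by (meson mult_pos_pos not_le)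
    then show "f x = g x" by (metis min_le_iff_disj not_one_le_zero dist_le_zero_iff)
  qed
qed (simp add: co_dist_def)

lemma co_dist_triangle: "co_dist f h \<le> co_dist f g + co_dist g h"
proof (rule co_dist_le)
  fix x
  have "min 1 (dist (f x) (h x)) \<le> min 1 (dist (f x) (g x)) + min 1 (dist (g x) (h x))"
    using dist_triangle[of "f x" "h x" "g x"] zero_le_dist[of "f x" "g x"] zero_le_dist[of "g x" "h x"]
    unfolding min_def by (smt (verit))
  then have "decay x * min 1 (dist (f x) (h x))
      \<le> decay x * min 1 (dist (f x) (g x)) + decay x * min 1 (dist (g x) (h x))"
    using decay_pos[of x] by (simp add: distrib_left[symmetric])
  also have "\<dots> \<le> co_dist f g + co_dist g h"
    using co_dist_ge[of x f g] co_dist_ge[of x g h] by linarith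
  finally show "decay x * min 1 (dist (f x) (h x)) \<le> co_dist f g + co_dist g h" .
qed

lemma Metric_space_co_dist: "Metric_space S co_dist"
  by unfold_locales (auto simp: co_dist_nonneg co_dist_commute co_dist_eq_0_iff co_dist_triangle)

interpretation CO: Metric_space UCB co_dist
  by (rule Metric_space_co_dist)

lemma co_dist_less_imp_dist_less:
  assumes "co_dist f g < decay R * min 1 e" "\<bar>x\<bar> \<le> R" "e > 0"
  shows "dist (f x) (g x) < e"
proof (rule ccontr)
  assume "\<not> dist (f x) (g x) < e"
  then have "min 1 e \<le> min 1 (dist (f x) (g x))" by (auto simp: min_def)
  then have "decay R * min 1 e \<le> decay x * min 1 (dist (f x) (g x))"
    using decay_antimono[of x R] decay_pos[of R] assms(2,3) by (intro mult_mono) auto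
  then show False using co_dist_ge[of x f g] assms(1) by simp
qed

lemma co_dist_le_if_close:
  assumes "\<And>x. \<bar>x\<bar> \<le> R \<Longrightarrow> dist (f x) (g x) \<le> e" "decay R \<le> e" "R \<ge> 0"
  shows "co_dist f g \<le> e"
proof (rule co_dist_le)
  fix x
  show "decay x * min 1 (dist (f x) (g x)) \<le> e"
  proof (cases "\<bar>x\<bar> \<le> R")
    case True
    have "decay x * min 1 (dist (f x) (g x)) \<le> 1 * dist (f x) (g x)"
      using decay_pos[of x] decay_le_1[of x] by (intro mult_mono) auto
    then show ?thesis using assms(1)[OF True] by simp
  next
    case False
    have "decay x * min 1 (dist (f x) (g x)) \<le> decay x * 1"
      using decay_pos[of x] by (intro mult_left_mono) auto
    also have "\<dots> \<le> decay R" using False assms(3) by (simp add: decay_antimono)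
    finally show ?thesis using assms(2) by simp
  qed
qed

lemma co_ball_subset_compact_nbhd:
  assumes "compact K" "e > 0"
  obtains r where "r > 0" "CO.mball f r \<subseteq> {g \<in> UCB. \<forall>x\<in>K. dist (g x) (f x) < e}"
proof -
  obtain R where R: "\<And>x. x \<in> K \<Longrightarrow> \<bar>x\<bar> \<le> R"
    using compact_imp_bounded[OF assms(1)] by (auto simp: bounded_iff)
  have "g \<in> {g \<in> UCB. \<forall>x\<in>K. dist (g x) (f x) < e}" if g: "g \<in> CO.mball f (decay R * min 1 e)" for g
  proof -
    have "dist (g x) (f x) < e" if "x \<in> K" for x
      using co_dist_less_imp_dist_less[of f g R e x] g R[OF that] assms(2) by (simp add: dist_commute)
    then show ?thesis using g by simp
  qed
  then have "CO.mball f (decay R * min 1 e) \<subseteq> {g \<in> UCB. \<forall>x\<in>K. dist (g x) (f x) < e}" by blast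
  moreover have "decay R * min 1 e > 0" using decay_pos[of R] assms(2) by simp
  ultimately show thesis using that by blast
qed

lemma compact_nbhd_subset_co_ball:
  assumes "f \<in> UCB" "r > 0"
  shows "{g \<in> UCB. \<forall>x\<in>cball 0 (4/r). dist (g x) (f x) < r/2} \<subseteq> CO.mball f r"
proof
  fix g assume g: "g \<in> {g \<in> UCB. \<forall>x\<in>cball 0 (4/r). dist (g x) (f x) < r/2}"
  have "decay (4/r) \<le> r/2" using decay_less[of "r/2"] assms(2) by simp
  then have "co_dist f g \<le> r/2"
    using g assms(2) by (intro co_dist_le_if_close) (auto simp: dist_commute less_imp_le)
  then show "g \<in> CO.mball f r" using g assms by simp
qed

lemma compact_open_eq_mtopology: "compact_open = CO.mtopology"
  unfolding compact_open_def CO.mtopology_def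
proof (rule arg_cong[where f = topology], intro ext iffI)
  fix S assume S: "S \<subseteq> UCB \<and>
    (\<forall>f\<in>S. \<exists>K e. compact K \<and> e > 0 \<and> {g \<in> UCB. \<forall>x\<in>K. dist (g x) (f x) < e} \<subseteq> S)"
  have "\<exists>r>0. CO.mball f r \<subseteq> S" if "f \<in> S" for f
  proof -
    have "\<exists>K e. compact K \<and> e > 0 \<and> {g \<in> UCB. \<forall>x\<in>K. dist (g x) (f x) < e} \<subseteq> S"
      using S that by simp
    then obtain K e where K: "compact K" "e > 0" and KS: "{g \<in> UCB. \<forall>x\<in>K. dist (g x) (f x) < e} \<subseteq> S"
      by (elim exE conjE)
    obtain r where r: "r > 0" "CO.mball f r \<subseteq> {g \<in> UCB. \<forall>x\<in>K. dist (g x) (f x) < e}"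
      using co_ball_subset_compact_nbhd[OF K] by blast
    show ?thesis using r(1) subset_trans[OF r(2) KS] by blast
  qed
  then show "CO.mopen S" using S unfolding CO.mopen_def by simp
next
  fix S assume S: "CO.mopen S"
  show "S \<subseteq> UCB \<and>
    (\<forall>f\<in>S. \<exists>K e. compact K \<and> e > 0 \<and> {g \<in> UCB. \<forall>x\<in>K. dist (g x) (f x) < e} \<subseteq> S)"
  proof (intro conjI ballI)
    show "S \<subseteq> UCB" using S unfolding CO.mopen_def by (elim conjE)
    fix f assume f: "f \<in> S"
    obtain r where r: "r > 0" "CO.mball f r \<subseteq> S" using S f unfolding CO.mopen_def by (elim conjE) auto
    have "f \<in> UCB" using \<open>S \<subseteq> UCB\<close> f by (rule subsetD)
    have "{g \<in> UCB. \<forall>x\<in>cball 0 (4/r). dist (g x) (f x) < r/2} \<subseteq> S"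
      using compact_nbhd_subset_co_ball[OF \<open>f \<in> UCB\<close> r(1)] r(2) by (rule subset_trans)
    then show "\<exists>K e. compact K \<and> e > 0 \<and> {g \<in> UCB. \<forall>x\<in>K. dist (g x) (f x) < e} \<subseteq> S"
      using r(1) by (intro exI[of _ "cball 0 (4/r)"] exI[of _ "r/2"]) simp
  qed
qed

section \<open>Continuity of locally determined maps\<close>

definition locally_determined ::
    "((real \<Rightarrow> 'a::metric_space) \<Rightarrow> real \<Rightarrow> 'b::metric_space) \<Rightarrow> (real \<Rightarrow> 'a) set \<Rightarrow> bool" where
  "locally_determined F A \<longleftrightarrow> (\<forall>e>0. \<exists>S\<ge>0. \<exists>\<eta>>0. \<forall>U\<in>A. \<forall>V\<in>A. \<forall>t.
     (\<forall>y. \<bar>y\<bar> \<le> \<bar>t\<bar> + S \<longrightarrow> dist (U y) (V y) < \<eta>) \<longrightarrow> dist (F U t) (F V t) \<le> e)"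

lemma locally_determinedD:
  assumes "locally_determined F A" "e > 0"
  obtains S \<eta> where "S \<ge> 0" "\<eta> > 0"
    "\<And>U V t. U \<in> A \<Longrightarrow> V \<in> A \<Longrightarrow> (\<And>y. \<bar>y\<bar> \<le> \<bar>t\<bar> + S \<Longrightarrow> dist (U y) (V y) < \<eta>) \<Longrightarrow>
      dist (F U t) (F V t) \<le> e"
proof -
  obtain S \<eta> where "S \<ge> 0" "\<eta> > 0" and H: "\<forall>U\<in>A. \<forall>V\<in>A. \<forall>t.
      (\<forall>y. \<bar>y\<bar> \<le> \<bar>t\<bar> + S \<longrightarrow> dist (U y) (V y) < \<eta>) \<longrightarrow> dist (F U t) (F V t) \<le> e"
    using assms unfolding locally_determined_def by (elim allE[of _ e] impE exE conjE) auto
  then show thesis using that by simp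
qed

lemma locally_determinedI:
  assumes "\<And>e. e > 0 \<Longrightarrow> \<exists>S\<ge>0. \<exists>\<eta>>0. \<forall>U\<in>A. \<forall>V\<in>A. \<forall>t.
     (\<forall>y. \<bar>y\<bar> \<le> \<bar>t\<bar> + S \<longrightarrow> dist (U y) (V y) < \<eta>) \<longrightarrow> dist (F U t) (F V t) \<le> e"
  shows "locally_determined F A"
  unfolding locally_determined_def by (intro allI impI) (rule assms)

lemma locally_determined_const_diff:
  fixes F :: "(real \<Rightarrow> 'a::metric_space) \<Rightarrow> real \<Rightarrow> real"
  assumes "locally_determined F A"
  shows "locally_determined (\<lambda>U t. c - F U t) A"
  using assms unfolding locally_determined_def by (simp add: dist_real_def abs_minus_commute)

lemma locally_determined_Pair:
  assumes F: "locally_determined F A" and G: "locally_determined G A"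
  shows "locally_determined (\<lambda>U t. (F U t, G U t)) A"
proof (rule locally_determinedI)
  fix e :: real assume "e > 0"
  then have "e/2 > 0" by simp
  obtain S1 \<eta>1 where S1: "S1 \<ge> 0" "\<eta>1 > 0" and F: "\<And>U V t. U \<in> A \<Longrightarrow> V \<in> A \<Longrightarrow>
      (\<And>y. \<bar>y\<bar> \<le> \<bar>t\<bar> + S1 \<Longrightarrow> dist (U y) (V y) < \<eta>1) \<Longrightarrow> dist (F U t) (F V t) \<le> e/2"
    using locally_determinedD[OF F \<open>e/2 > 0\<close>] by blast
  obtain S2 \<eta>2 where S2: "S2 \<ge> 0" "\<eta>2 > 0" and G: "\<And>U V t. U \<in> A \<Longrightarrow> V \<in> A \<Longrightarrow>
      (\<And>y. \<bar>y\<bar> \<le> \<bar>t\<bar> + S2 \<Longrightarrow> dist (U y) (V y) < \<eta>2) \<Longrightarrow> dist (G U t) (G V t) \<le> e/2"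
    using locally_determinedD[OF G \<open>e/2 > 0\<close>] by blast
  show "\<exists>S\<ge>0. \<exists>\<eta>>0. \<forall>U\<in>A. \<forall>V\<in>A. \<forall>t. (\<forall>y. \<bar>y\<bar> \<le> \<bar>t\<bar> + S \<longrightarrow> dist (U y) (V y) < \<eta>)
      \<longrightarrow> dist (F U t, G U t) (F V t, G V t) \<le> e"
  proof (rule exI[of _ "max S1 S2"], intro conjI exI[of _ "min \<eta>1 \<eta>2"] ballI allI impI)
    show "max S1 S2 \<ge> 0" "min \<eta>1 \<eta>2 > 0" using S1 S2 by auto
    fix U V t assume U: "U \<in> A" and V: "V \<in> A"
      and close: "\<forall>y. \<bar>y\<bar> \<le> \<bar>t\<bar> + max S1 S2 \<longrightarrow> dist (U y) (V y) < min \<eta>1 \<eta>2"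
    have "dist (F U t) (F V t) \<le> e/2" using close by (intro F[OF U V]) auto
    moreover have "dist (G U t) (G V t) \<le> e/2" using close by (intro G[OF U V]) auto
    moreover have "dist (F U t, G U t) (F V t, G V t) \<le> dist (F U t) (F V t) + dist (G U t) (G V t)"
      by (simp add: dist_Pair_Pair sqrt_sum_squares_le_sum)
    ultimately show "dist (F U t, G U t) (F V t, G V t) \<le> e" by linarith
  qed
qed

lemma continuous_map_if_locally_determined:
  assumes A: "A \<subseteq> UCB" and maps: "F ` A \<subseteq> A" and F: "locally_determined F A"
  shows "continuous_map (subtopology CO.mtopology A) (subtopology CO.mtopology A) F"
proof -
  interpret Submetric UCB co_dist A
    using A by unfold_locales
  have "\<exists>\<delta>>0. \<forall>V. V \<in> A \<and> co_dist U V < \<delta> \<longrightarrow> co_dist (F U) (F V) < e"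
    if U: "U \<in> A" and e: "e > 0" for U e
  proof -
    obtain S \<eta> where S: "S \<ge> 0" and \<eta>: "\<eta> > 0" and close: "\<And>U V t. U \<in> A \<Longrightarrow> V \<in> A \<Longrightarrow>
        (\<And>y. \<bar>y\<bar> \<le> \<bar>t\<bar> + S \<Longrightarrow> dist (U y) (V y) < \<eta>) \<Longrightarrow> dist (F U t) (F V t) \<le> e/2"
      using locally_determinedD[OF F, of "e/2"] e by auto
    have "co_dist (F U) (F V) < e" if V: "V \<in> A" and UV: "co_dist U V < decay (4/e + S) * min 1 \<eta>" for V
    proof -
      have "dist (F U t) (F V t) \<le> e/2" if t: "\<bar>t\<bar> \<le> 4/e" for t
      proof (rule close[OF U V])
        fix y assume "\<bar>y\<bar> \<le> \<bar>t\<bar> + S"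
        then have "\<bar>y\<bar> \<le> 4/e + S" using t by linarith
        then show "dist (U y) (V y) < \<eta>" by (rule co_dist_less_imp_dist_less[OF UV _ \<eta>])
      qed
      moreover have "decay (4/e) \<le> e/2" using decay_less[of "e/2"] e by simp
      ultimately have "co_dist (F U) (F V) \<le> e/2"
        using e by (intro co_dist_le_if_close) auto
      then show ?thesis using e by linarith
    qed
    moreover have "decay (4/e + S) * min 1 \<eta> > 0" using decay_pos \<eta> by simp
    ultimately show ?thesis by blast
  qed
  then have "continuous_map sub.mtopology sub.mtopology F"
    using maps by (subst sub.metric_continuous_map[OF sub.Metric_space_axioms]) blast
  then show ?thesis by (simp add: mtopology_submetric)
qed

section \<open>Equicontinuous families\<close>

definition equicont_class :: "(real \<Rightarrow> real) \<Rightarrow> (real \<Rightarrow> real \<times> real) set" where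
  "equicont_class W = {f. range f \<subseteq> {0..1} \<times> {0..1} \<and> (\<forall>t h. dist (f (t + h)) (f t) \<le> W h)}"

lemma equicont_class_dist_le:
  assumes "f \<in> equicont_class W"
  shows "dist (f y) (f x) \<le> W (y - x)"
proof -
  have "dist (f (x + (y - x))) (f x) \<le> W (y - x)"
    using assms unfolding equicont_class_def by blast
  then show ?thesis by simp
qed

lemma equicont_class_dist_shift:
  assumes "f \<in> equicont_class W" "g \<in> equicont_class W"
  shows "dist (f x) (g x) \<le> dist (f y) (g y) + 2 * W (x - y)"
proof -
  have "dist (f x) (g x) \<le> dist (f x) (f y) + dist (f y) (g y) + dist (g y) (g x)"
    using dist_triangle[of "f x" "g x" "f y"] dist_triangle[of "f y" "g x" "g y"] by linarith
  then show ?thesis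
    using equicont_class_dist_le[OF assms(1), of x y] equicont_class_dist_le[OF assms(2), of x y]
    by (simp add: dist_commute)
qed

lemma equicont_class_subset_C01:
  assumes "vanishes_at_0 W"
  shows "equicont_class W \<subseteq> C01"
proof
  fix f assume f: "f \<in> equicont_class W"
  have "uniformly_continuous_on UNIV f"
    unfolding uniformly_continuous_on_def
  proof (intro allI impI)
    fix e :: real assume "e > 0"
    then obtain d where d: "d > 0" "\<And>h. \<bar>h\<bar> < d \<Longrightarrow> W h < e"
      using vanishes_at_0D[OF assms] by blast
    have "dist (f x') (f x) < e" if "dist x' x < d" for x x'
      using equicont_class_dist_le[OF f, of x' x] d(2)[of "x' - x"] that
      by (simp add: dist_real_def)
    then show "\<exists>d>0. \<forall>x\<in>UNIV. \<forall>x'\<in>UNIV. dist x' x < d \<longrightarrow> dist (f x') (f x) < e"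
      using d(1) by blast
  qed
  moreover have box: "range f \<subseteq> {0..1} \<times> {0..1}" using f by (simp add: equicont_class_def)
  moreover have "bounded (range f)"
    using box by (rule bounded_subset[rotated]) (simp add: bounded_Times)
  moreover have "\<forall>x. f x \<in> {0..1} \<times> {0..1}" using box by blast
  ultimately show "f \<in> C01"
    unfolding C01_def UCB_def by (simp add: mem_Times_iff)
qed

lemma equicont_class_pointwise_limit:
  assumes \<sigma>: "\<And>n. \<sigma> n \<in> equicont_class W" and lim: "\<And>x. (\<lambda>n. \<sigma> n x) \<longlonglongrightarrow> l x"
  shows "l \<in> equicont_class W"
proof -
  have "l x \<in> {0..1} \<times> {0..1}" for x
  proof (rule Lim_in_closed_set[OF _ _ _ lim])
    show "\<forall>\<^sub>F n in sequentially. \<sigma> n x \<in> {0..1} \<times> {0..1}"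
      using \<sigma> by (intro always_eventually allI) (auto simp: equicont_class_def)
  qed (auto simp: closed_Times)
  moreover have "dist (l (t + h)) (l t) \<le> W h" for t h
    using \<sigma> by (intro LIMSEQ_le_const2[OF tendsto_dist[OF lim lim]]) (auto simp: equicont_class_def)
  ultimately show ?thesis by (simp add: equicont_class_def image_subset_iff)
qed

lemma equicont_class_limitin:
  assumes W: "vanishes_at_0 W" and \<sigma>: "\<And>n. \<sigma> n \<in> equicont_class W" and l: "l \<in> equicont_class W"
    and lim: "\<And>x. (\<lambda>n. \<sigma> n x) \<longlonglongrightarrow> l x"
  shows "limitin CO.mtopology \<sigma> l sequentially"
  unfolding CO.limitin_metric
proof (intro conjI allI impI)
  have UCB: "f \<in> UCB" if "f \<in> equicont_class W" for f
    using equicont_class_subset_C01[OF W] that by (auto simp: C01_def)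
  show "l \<in> UCB" using UCB[OF l] .
  fix \<epsilon> :: real assume "\<epsilon> > 0"
  define R where "R = 2 / (\<epsilon>/2)"
  have R: "R \<ge> 0" "decay R \<le> \<epsilon>/2" using \<open>\<epsilon> > 0\<close> decay_less[of "\<epsilon>/2"] by (auto simp: R_def)
  obtain \<delta> where \<delta>: "\<delta> > 0" "\<And>h. \<bar>h\<bar> < \<delta> \<Longrightarrow> W h < \<epsilon>/6"
    using vanishes_at_0D[OF W, of "\<epsilon>/6"] \<open>\<epsilon> > 0\<close> by auto
  have cover: "cball (0::real) R \<subseteq> (\<Union>y\<in>cball 0 R. ball y \<delta>)"
    by (rule subsetI, rule UN_I, assumption) (simp add: \<delta>(1))
  obtain F where F: "F \<subseteq> cball (0::real) R" "finite F" "cball 0 R \<subseteq> (\<Union>y\<in>F. ball y \<delta>)"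
    by (rule compactE_image[OF compact_cball _ cover]) (simp, blast)
  \<comment> \<open>Equicontinuity upgrades convergence on the finite net F to convergence on cball 0 R.\<close>
  have "\<forall>\<^sub>F n in sequentially. \<forall>y\<in>F. dist (\<sigma> n y) (l y) < \<epsilon>/6"
  proof (rule eventually_ball_finite[OF F(2)], rule ballI)
    show "\<forall>\<^sub>F n in sequentially. dist (\<sigma> n y) (l y) < \<epsilon>/6" for y
      using \<open>\<epsilon> > 0\<close> by (intro tendstoD[OF lim]) simp
  qed
  then show "\<forall>\<^sub>F n in sequentially. \<sigma> n \<in> UCB \<and> co_dist (\<sigma> n) l < \<epsilon>"
  proof (rule eventually_mono)
    fix n assume n: "\<forall>y\<in>F. dist (\<sigma> n y) (l y) < \<epsilon>/6"
    have "dist (\<sigma> n x) (l x) \<le> \<epsilon>/2" if "\<bar>x\<bar> \<le> R" for x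
    proof -
      have "x \<in> cball 0 R" using that by simp
      then have "x \<in> (\<Union>y\<in>F. ball y \<delta>)" using F(3) by blast
      then obtain y where y: "y \<in> F" "dist y x < \<delta>" by auto
      then have "W (x - y) < \<epsilon>/6" using \<delta>(2) by (simp add: dist_real_def)
      moreover have "dist (\<sigma> n y) (l y) < \<epsilon>/6" using n y(1) by blast
      ultimately show ?thesis using equicont_class_dist_shift[OF \<sigma>[of n] l, of x y] by linarith
    qed
    then have "co_dist (\<sigma> n) l \<le> \<epsilon>/2" using co_dist_le_if_close[OF _ R(2,1)] by blast
    then show "\<sigma> n \<in> UCB \<and> co_dist (\<sigma> n) l < \<epsilon>"
      using UCB[OF \<sigma>] \<open>\<epsilon> > 0\<close> by simp
  qed
qed

lemma Cauchy_if_equicontinuous_dense: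
  assumes W: "vanishes_at_0 W" and \<sigma>: "\<And>n. \<sigma> n \<in> equicont_class W"
    and dense: "\<And>x e. e > 0 \<Longrightarrow> \<exists>y\<in>D. \<bar>x - y\<bar> < e"
    and conv: "\<And>y. y \<in> D \<Longrightarrow> convergent (\<lambda>n. \<sigma> n y)"
  shows "Cauchy (\<lambda>n. \<sigma> n x)"
  unfolding Cauchy_def
proof (intro allI impI)
  fix e :: real assume "e > 0"
  obtain \<delta> where \<delta>: "\<delta> > 0" "\<And>h. \<bar>h\<bar> < \<delta> \<Longrightarrow> W h < e/3"
    using vanishes_at_0D[OF W, of "e/3"] \<open>e > 0\<close> by auto
  obtain y where y: "y \<in> D" "\<bar>x - y\<bar> < \<delta>" using dense[OF \<delta>(1)] by blast
  have "e/3 > 0" using \<open>e > 0\<close> by simp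
  then obtain M where M: "\<forall>m\<ge>M. \<forall>n\<ge>M. dist (\<sigma> m y) (\<sigma> n y) < e/3"
    using convergent_Cauchy[OF conv[OF y(1)]] unfolding Cauchy_def by blast
  have "dist (\<sigma> m x) (\<sigma> n x) < e" if "m \<ge> M" "n \<ge> M" for m n
  proof -
    have "dist (\<sigma> m y) (\<sigma> n y) < e/3" using M that by blast
    then show ?thesis using equicont_class_dist_shift[OF \<sigma> \<sigma>, of m x n y] \<delta>(2)[OF y(2)] by linarith
  qed
  then show "\<exists>M. \<forall>m\<ge>M. \<forall>n\<ge>M. dist (\<sigma> m x) (\<sigma> n x) < e" by blast
qed

lemma compactin_equicont_class:
  assumes W: "vanishes_at_0 W"
  shows "compactin CO.mtopology (equicont_class W)"
  unfolding CO.compactin_sequentially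
proof (intro conjI allI impI)
  show "equicont_class W \<subseteq> UCB"
    using equicont_class_subset_C01[OF W] by (auto simp: C01_def)
  fix \<sigma> :: "nat \<Rightarrow> real \<Rightarrow> real \<times> real" assume "range \<sigma> \<subseteq> equicont_class W"
  then have \<sigma>: "\<And>n. \<sigma> n \<in> equicont_class W" by auto
  obtain B where B: "\<forall>p \<in> {0..1::real} \<times> {0..1::real}. norm p \<le> B"
    using bounded_Times[OF bounded_closed_interval bounded_closed_interval] unfolding bounded_iff by blast
  have "norm (\<sigma> n x) \<le> B" for n x
  proof -
    have "\<sigma> n x \<in> {0..1} \<times> {0..1}" using \<sigma>[of n] by (auto simp: equicont_class_def)
    then show ?thesis by (rule bspec[OF B])
  qed
  then obtain k where k: "strict_mono k" "\<And>y. y \<in> \<rat> \<Longrightarrow> \<exists>L. (\<lambda>n. \<sigma> (k n) y) \<longlonglongrightarrow> L"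
    using function_convergent_subsequence[OF countable_rat, of \<sigma> B] by blast
  have \<sigma>k: "(\<sigma> \<circ> k) n \<in> equicont_class W" for n using \<sigma> by simp
  define l where "l x = lim (\<lambda>n. (\<sigma> \<circ> k) n x)" for x
  have "Cauchy (\<lambda>n. (\<sigma> \<circ> k) n x)" for x
  proof (rule Cauchy_if_equicontinuous_dense[OF W \<sigma>k])
    show "\<exists>y\<in>\<rat>. \<bar>z - y\<bar> < e" if "e > 0" for z e :: real
    proof -
      have "z - e < z" using that by simp
      then obtain q where "q \<in> \<rat>" "z - e < q" "q < z" using Rats_dense_in_real by blast
      then show ?thesis by (intro bexI[of _ q]) auto
    qed
  qed (use k(2) in \<open>auto simp: convergent_def\<close>)
  then have lim: "(\<lambda>n. (\<sigma> \<circ> k) n x) \<longlonglongrightarrow> l x" for x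
    unfolding l_def by (simp add: Cauchy_convergent_iff convergent_LIMSEQ_iff)
  have l: "l \<in> equicont_class W"
    using equicont_class_pointwise_limit[OF \<sigma>k lim] .
  show "\<exists>l r. l \<in> equicont_class W \<and> strict_mono r \<and> limitin CO.mtopology (\<sigma> \<circ> r) l sequentially"
    using equicont_class_limitin[OF W \<sigma>k l lim] k(1) l by blast
qed

section \<open>The nonlinearities\<close>

text \<open>That is, u |-> (1 - u) e^(r u) is nonincreasing on [0, 1]; this is where r_i < 1 enters.\<close>
lemma one_minus_mul_exp_le:
  fixes x y r :: real
  assumes "0 \<le> x" "x \<le> y" "y \<le> 1" "r \<le> 1"
  shows "(1 - y) * exp (r * (y - x)) \<le> 1 - x"
proof -
  define \<delta> where "\<delta> = y - x"
  have \<delta>: "0 \<le> \<delta>" "\<delta> \<le> 1" using assms by (auto simp: \<delta>_def)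
  have "(1 - \<delta>) * exp \<delta> \<le> exp (- \<delta>) * exp \<delta>"
    using exp_ge_add_one_self[of "- \<delta>"] by (intro mult_right_mono) auto
  then have exp_bound: "(1 - \<delta>) * exp \<delta> \<le> 1" by (simp add: exp_minus)
  have "(1 - y) * exp (r * \<delta>) \<le> (1 - y) * exp \<delta>"
    using mult_right_mono[of r 1 \<delta>] \<delta> assms by (intro mult_left_mono) auto
  also have "\<dots> = (1 - y) + (1 - y) * (exp \<delta> - 1)" by (simp add: algebra_simps)
  also have "\<dots> \<le> (1 - y) + (1 - \<delta>) * (exp \<delta> - 1)"
    using \<delta> assms by (intro add_left_mono mult_right_mono) (auto simp: \<delta>_def)
  also have "\<dots> \<le> 1 - x" using exp_bound by (simp add: algebra_simps \<delta>_def)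
  finally show ?thesis by (simp add: \<delta>_def)
qed

definition G1 :: "real \<Rightarrow> real \<Rightarrow> real \<times> real \<Rightarrow> real" where
  "G1 r a p = (1 - fst p) * exp (r * (fst p - a * snd p))"

definition G2 :: "real \<Rightarrow> real \<Rightarrow> real \<times> real \<Rightarrow> real" where
  "G2 r a p = snd p * exp (r * (1 - a - snd p + a * fst p))"

lemma continuous_on_G1: "continuous_on UNIV (G1 r a)"
  unfolding G1_def by (intro continuous_intros)

lemma continuous_on_G2: "continuous_on UNIV (G2 r a)"
  unfolding G2_def by (intro continuous_intros)

lemma G1_antimono:
  assumes r: "r \<le> 1" and ra: "0 \<le> r * a"
    and p: "p \<in> {0..1} \<times> {0..1}" and q: "q \<in> {0..1} \<times> {0..1}"
    and pq: "fst p \<le> fst q" "snd p \<le> snd q"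
  shows "G1 r a q \<le> G1 r a p"
proof -
  have split: "G1 r a z = (1 - fst z) * exp (r * fst z) * exp (- (r * a * snd z))" for z
    unfolding G1_def by (simp add: algebra_simps flip: exp_add)
  have "(1 - fst q) * exp (r * fst q) = (1 - fst q) * exp (r * (fst q - fst p)) * exp (r * fst p)"
    by (simp add: algebra_simps flip: exp_add)
  also have "\<dots> \<le> (1 - fst p) * exp (r * fst p)"
    using one_minus_mul_exp_le[of "fst p" "fst q" r] p q pq r
    by (intro mult_right_mono) (auto simp: mem_Times_iff)
  finally have "(1 - fst q) * exp (r * fst q) \<le> (1 - fst p) * exp (r * fst p)" .
  moreover have "exp (- (r * a * snd q)) \<le> exp (- (r * a * snd p))"
    using pq ra by (simp add: mult_left_mono)
  moreover have "0 \<le> (1 - fst q) * exp (r * fst q)" using q by (simp add: mem_Times_iff)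
  ultimately show ?thesis unfolding split
    by (meson exp_ge_zero mult_mono order_trans mult_left_mono)
qed

lemma G2_mono:
  assumes r: "r \<le> 1" and ra: "0 \<le> r * a"
    and p: "p \<in> {0..1} \<times> {0..1}" and q: "q \<in> {0..1} \<times> {0..1}"
    and pq: "fst p \<le> fst q" "snd p \<le> snd q"
  shows "G2 r a p \<le> G2 r a q"
proof -
  have split: "G2 r a z = snd z * exp (- (r * snd z)) * exp (r * (1 - a) + r * a * fst z)" for z
    unfolding G2_def by (simp add: algebra_simps flip: exp_add)
  have "snd p * exp (- (r * snd p)) = snd p * exp (r * (snd q - snd p)) * exp (- (r * snd q))"
    by (simp add: algebra_simps flip: exp_add)
  also have "\<dots> \<le> snd q * exp (- (r * snd q))"
    using one_minus_mul_exp_le[of "1 - snd q" "1 - snd p" r] p q pq r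
    by (intro mult_right_mono) (auto simp: mem_Times_iff)
  finally have "snd p * exp (- (r * snd p)) \<le> snd q * exp (- (r * snd q))" .
  moreover have "exp (r * (1 - a) + r * a * fst p) \<le> exp (r * (1 - a) + r * a * fst q)"
    using pq ra by (simp add: mult_left_mono)
  moreover have "0 \<le> snd p * exp (- (r * snd p))" using p by (simp add: mem_Times_iff)
  ultimately show ?thesis unfolding split
    by (meson exp_ge_zero mult_mono order_trans mult_left_mono)
qed

lemma G1_unit_interval:
  assumes "r \<le> 1" "0 \<le> r * a" "p \<in> {0..1} \<times> {0..1}"
  shows "0 \<le> G1 r a p \<and> G1 r a p \<le> 1"
  using G1_antimono[OF assms(1,2), of "(0, 0)" p] assms(3) by (auto simp: G1_def mem_Times_iff)

lemma G2_unit_interval: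
  assumes "r \<le> 1" "0 \<le> r * a" "p \<in> {0..1} \<times> {0..1}"
  shows "0 \<le> G2 r a p \<and> G2 r a p \<le> 1"
  using G2_mono[OF assms(1,2), of p "(1, 1)"] assms(3) by (auto simp: G2_def mem_Times_iff)

section \<open>Convolution with a kernel\<close>

definition convolve :: "(real \<Rightarrow> real) \<Rightarrow> (real \<Rightarrow> real) \<Rightarrow> real \<Rightarrow> real" where
  "convolve g l t = (LINT y|lebesgue. g y * l (t - y))"

lemma integrable_convolve_integrand:
  fixes g g' l :: "real \<Rightarrow> real"
  assumes l: "integrable lebesgue l" and g: "g \<in> borel_measurable lebesgue" "\<And>y. \<bar>g y\<bar> \<le> M"
  shows "integrable lebesgue (\<lambda>y. g y * l (t - y))"
proof -
  have "integrable lebesgue (\<lambda>y. M * l (t - y))"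
    using integrable_reflect_real[OF l] by simp
  moreover have "(\<lambda>y. g y * l (t - y)) \<in> borel_measurable lebesgue"
    using g(1) borel_measurable_integrable[OF integrable_reflect_real[OF l, of t]] by measurable
  moreover have "AE y in lebesgue. norm (g y * l (t - y)) \<le> norm (M * l (t - y))"
  proof (rule AE_I2)
    fix y
    have "\<bar>g y\<bar> \<le> \<bar>M\<bar>" using g(2)[of y] by linarith
    then show "norm (g y * l (t - y)) \<le> norm (M * l (t - y))" by (simp add: abs_mult mult_right_mono)
  qed
  ultimately show ?thesis by (rule Bochner_Integration.integrable_bound)
qed

lemma convolve_mono:
  fixes g g' l :: "real \<Rightarrow> real"
  assumes l: "integrable lebesgue l" "\<And>y. 0 \<le> l y"
    and g: "g \<in> borel_measurable lebesgue" "\<And>y. \<bar>g y\<bar> \<le> M"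
    and g': "g' \<in> borel_measurable lebesgue" "\<And>y. \<bar>g' y\<bar> \<le> M"
    and le: "\<And>y. g y \<le> g' y"
  shows "convolve g l t \<le> convolve g' l t"
  unfolding convolve_def
  using integrable_convolve_integrand[OF l(1) g] integrable_convolve_integrand[OF l(1) g'] le l(2)
  by (intro integral_mono) (auto intro: mult_right_mono)

lemma convolve_unit_interval:
  fixes g g' l :: "real \<Rightarrow> real"
  assumes "kernel l" and g: "g \<in> borel_measurable lebesgue" "\<And>y. 0 \<le> g y \<and> g y \<le> 1"
  shows "0 \<le> convolve g l t \<and> convolve g l t \<le> 1"
proof
  have l: "integrable lebesgue l" "(LINT y|lebesgue. l y) = 1" "\<And>y. 0 \<le> l y"
    using assms(1) by (auto simp: kernel_def)
  show "0 \<le> convolve g l t" unfolding convolve_def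
    using g(2) l(3) by (intro Bochner_Integration.integral_nonneg) simp
  have "convolve g l t \<le> (LINT y|lebesgue. l (t - y))"
    unfolding convolve_def
  proof (rule integral_mono)
    show "integrable lebesgue (\<lambda>y. g y * l (t - y))"
      using g by (intro integrable_convolve_integrand[OF l(1), of _ 1]) (auto simp: abs_le_iff)
    show "g y * l (t - y) \<le> l (t - y)" for y
      using g(2)[of y] l(3)[of "t - y"] by (simp add: mult_left_le_one_le)
  qed (rule integrable_reflect_real[OF l(1)])
  also have "\<dots> = 1" using integral_reflect_real[of l t] l(2) by simp
  finally show "convolve g l t \<le> 1" .
qed

lemma convolve_translate_le:
  fixes g g' l :: "real \<Rightarrow> real"
  assumes l: "integrable lebesgue l" and g: "g \<in> borel_measurable lebesgue" "\<And>y. \<bar>g y\<bar> \<le> 1"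
  shows "\<bar>convolve g l (t + h) - convolve g l t\<bar> \<le> L1_modulus l h"
proof -
  have i: "integrable lebesgue (\<lambda>y. g y * l (s - y))" for s
    by (rule integrable_convolve_integrand[OF l g])
  have d: "integrable lebesgue (\<lambda>y. \<bar>l (t - y + h) - l (t - y)\<bar>)"
    using integrable_reflect_real[OF integrable_translate_diff[OF l, of h], of t] .
  have "\<bar>convolve g l (t + h) - convolve g l t\<bar> = \<bar>LINT y|lebesgue. g y * (l (t - y + h) - l (t - y))\<bar>"
    unfolding convolve_def using i[of "t + h"] i[of t]
    by (simp add: algebra_simps flip: Bochner_Integration.integral_diff)
  also have "\<dots> \<le> (LINT y|lebesgue. \<bar>g y * (l (t - y + h) - l (t - y))\<bar>)"
    by (rule integral_abs_bound)
  also have "\<dots> \<le> (LINT y|lebesgue. \<bar>l (t - y + h) - l (t - y)\<bar>)"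
  proof (rule integral_mono[OF _ d])
    show "integrable lebesgue (\<lambda>y. \<bar>g y * (l (t - y + h) - l (t - y))\<bar>)"
      using i[of "t + h"] i[of t] by (simp add: algebra_simps)
    show "\<bar>g y * (l (t - y + h) - l (t - y))\<bar> \<le> \<bar>l (t - y + h) - l (t - y)\<bar>" for y
      using g(2)[of y] by (simp add: abs_mult mult_left_le_one_le)
  qed
  also have "\<dots> = L1_modulus l h"
    unfolding L1_modulus_def using integral_reflect_real[of "\<lambda>s. \<bar>l (s + h) - l s\<bar>" t] by simp
  finally show ?thesis .
qed

definition tail_mass :: "(real \<Rightarrow> real) \<Rightarrow> real \<Rightarrow> real" where
  "tail_mass l S = (LINT s|lebesgue. indicator {s. S < \<bar>s\<bar>} s * l s)"

lemma sets_lebesgue_abs_greater: "{s::real. S < \<bar>s\<bar>} \<in> sets lebesgue"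
proof -
  have "open {s::real. S < \<bar>s\<bar>}" by (intro open_Collect_less continuous_intros)
  then show ?thesis by simp
qed

lemma integrable_tail:
  fixes l :: "real \<Rightarrow> real"
  assumes "integrable lebesgue l"
  shows "integrable lebesgue (\<lambda>s. indicator {s. S < \<bar>s\<bar>} s * l s)"
  using integrable_real_mult_indicator[OF sets_lebesgue_abs_greater assms] by (simp add: mult.commute)

lemma tail_mass_small:
  fixes l :: "real \<Rightarrow> real"
  assumes l: "integrable lebesgue l" and e: "e > 0"
  obtains S where "S \<ge> 0" "tail_mass l S < e"
proof -
  have "AE s in lebesgue. (\<lambda>n. indicator {s. real n < \<bar>s\<bar>} s * l s) \<longlonglongrightarrow> (0::real)"
  proof (rule AE_I2)
    fix s :: real
    obtain N :: nat where "\<bar>s\<bar> \<le> real N" using real_arch_simple by blast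
    then have "\<forall>\<^sub>F n in sequentially. indicator {s. real n < \<bar>s\<bar>} s * l s = (0::real)"
      unfolding eventually_sequentially by (intro exI[of _ N]) (auto simp: indicator_def)
    then show "(\<lambda>n. indicator {s. real n < \<bar>s\<bar>} s * l s) \<longlonglongrightarrow> (0::real)"
      by (rule tendsto_eventually)
  qed
  moreover have "AE s in lebesgue. norm (indicator {s. real n < \<bar>s\<bar>} s * l s) \<le> \<bar>l s\<bar>" for n
    by (intro AE_I2) (auto simp: indicator_def)
  moreover have "(\<lambda>s. indicator {s. real n < \<bar>s\<bar>} s * l s) \<in> borel_measurable lebesgue" for n
    using integrable_tail[OF l] by (rule borel_measurable_integrable)
  ultimately have "(\<lambda>n. tail_mass l (real n)) \<longlonglongrightarrow> 0"
    unfolding tail_mass_def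
    using integral_dominated_convergence[of "\<lambda>s. 0" lebesgue "\<lambda>n s. indicator {s. real n < \<bar>s\<bar>} s * l s"
        "\<lambda>s. \<bar>l s\<bar>"] l
    by simp
  then have "\<forall>\<^sub>F n in sequentially. tail_mass l (real n) < e"
    using e by (intro order_tendstoD(2)) auto
  then obtain n where "tail_mass l (real n) < e"
    using eventually_happens'[OF sequentially_bot] by blast
  then show thesis using that[of "real n"] by simp
qed

lemma convolve_diff_le:
  fixes g g' l F :: "real \<Rightarrow> real"
  assumes l: "integrable lebesgue l" "\<And>y. 0 \<le> l y"
    and g: "g \<in> borel_measurable lebesgue" "\<And>y. \<bar>g y\<bar> \<le> M"
    and g': "g' \<in> borel_measurable lebesgue" "\<And>y. \<bar>g' y\<bar> \<le> M"
    and F: "integrable lebesgue F" "\<And>y. \<bar>g y - g' y\<bar> * l (t - y) \<le> F y"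
  shows "\<bar>convolve g l t - convolve g' l t\<bar> \<le> (LINT y|lebesgue. F y)"
proof -
  have i: "integrable lebesgue (\<lambda>y. g y * l (t - y))" "integrable lebesgue (\<lambda>y. g' y * l (t - y))"
    using integrable_convolve_integrand[OF l(1) g] integrable_convolve_integrand[OF l(1) g'] by auto
  have "\<bar>convolve g l t - convolve g' l t\<bar> = \<bar>LINT y|lebesgue. (g y - g' y) * l (t - y)\<bar>"
    unfolding convolve_def using i by (simp add: left_diff_distrib)
  also have "\<dots> \<le> (LINT y|lebesgue. \<bar>(g y - g' y) * l (t - y)\<bar>)"
    by (rule integral_abs_bound)
  also have "\<dots> \<le> (LINT y|lebesgue. F y)"
  proof (rule integral_mono[OF _ F(1)])
    show "integrable lebesgue (\<lambda>y. \<bar>(g y - g' y) * l (t - y)\<bar>)"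
      using i by (simp add: left_diff_distrib)
    show "\<bar>(g y - g' y) * l (t - y)\<bar> \<le> F y" for y
      using F(2)[of y] l(2)[of "t - y"] by (simp add: abs_mult)
  qed
  finally show ?thesis .
qed

lemma convolve_diff_le_local:
  fixes g g' l :: "real \<Rightarrow> real"
  assumes "kernel l" and g: "g \<in> borel_measurable lebesgue" "\<And>y. \<bar>g y\<bar> \<le> 1"
    and g': "g' \<in> borel_measurable lebesgue" "\<And>y. \<bar>g' y\<bar> \<le> 1"
    and c: "0 \<le> c" and near: "\<And>y. \<bar>t - y\<bar> \<le> S \<Longrightarrow> \<bar>g y - g' y\<bar> \<le> c"
  shows "\<bar>convolve g l t - convolve g' l t\<bar> \<le> c + 2 * tail_mass l S"
proof -
  have l: "integrable lebesgue l" "(LINT y|lebesgue. l y) = 1" "\<And>y. 0 \<le> l y"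
    using assms(1) by (auto simp: kernel_def)
  define F where "F y = c * l (t - y) + 2 * (indicator {s. S < \<bar>s\<bar>} (t - y) * l (t - y))" for y
  have iF: "integrable lebesgue F"
    unfolding F_def
    using integrable_reflect_real[OF l(1), of t] integrable_reflect_real[OF integrable_tail[OF l(1), of S], of t]
    by simp
  have "\<bar>g y - g' y\<bar> * l (t - y) \<le> F y" for y
  proof -
    have "\<bar>g y - g' y\<bar> \<le> c + 2 * indicator {s. S < \<bar>s\<bar>} (t - y)"
    proof (cases "\<bar>t - y\<bar> \<le> S")
      case True
      then show ?thesis using near[OF True] by simp
    next
      case False
      have "\<bar>g y - g' y\<bar> \<le> 2" using g(2)[of y] g'(2)[of y] by linarith
      then show ?thesis using False c by (simp add: indicator_def)
    qed
    then have "\<bar>g y - g' y\<bar> * l (t - y) \<le> (c + 2 * indicator {s. S < \<bar>s\<bar>} (t - y)) * l (t - y)"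
      using l(3)[of "t - y"] by (rule mult_right_mono)
    then show ?thesis unfolding F_def by (simp add: algebra_simps)
  qed
  then have "\<bar>convolve g l t - convolve g' l t\<bar> \<le> (LINT y|lebesgue. F y)"
    by (intro convolve_diff_le[OF l(1,3) g g' iF])
  also have "\<dots> = c + 2 * tail_mass l S"
    unfolding F_def tail_mass_def
    using integrable_reflect_real[OF l(1), of t] integrable_reflect_real[OF integrable_tail[OF l(1), of S], of t]
      integral_reflect_real[of l t] integral_reflect_real[of "\<lambda>s. indicator {s. S < \<bar>s\<bar>} s * l s" t] l(2)
    by simp
  finally show ?thesis .
qed

lemma C01_unit_square: "U \<in> C01 \<Longrightarrow> U y \<in> {0..1} \<times> {0..1}"
  by (auto simp: C01_def mem_Times_iff)

lemma measurable_comp_C01: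
  assumes "U \<in> C01" "continuous_on UNIV G"
  shows "(\<lambda>y. G (U y)) \<in> borel_measurable lebesgue"
proof -
  have "continuous_on UNIV U"
    using assms(1) by (auto simp: C01_def UCB_def intro: uniformly_continuous_imp_continuous)
  then have "continuous_on UNIV (\<lambda>y. G (U y))"
    using continuous_on_compose2[OF assms(2)] by blast
  then have "(\<lambda>y. G (U y)) \<in> borel_measurable (lebesgue_on UNIV)"
    by (rule continuous_imp_measurable_on_sets_lebesgue) simp
  then show ?thesis by (simp add: lebesgue_on_UNIV_eq)
qed

lemma locally_determined_convolve_comp:
  assumes l: "kernel l" and G: "continuous_on UNIV G" "\<And>p. p \<in> {0..1} \<times> {0..1} \<Longrightarrow> \<bar>G p\<bar> \<le> 1"
  shows "locally_determined (\<lambda>U. convolve (\<lambda>y. G (U y)) l) C01"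
proof (rule locally_determinedI)
  fix e :: real assume e: "e > 0"
  have "uniformly_continuous_on ({0..1} \<times> {0..1}) G"
    using G(1) by (intro compact_uniformly_continuous) (auto intro: continuous_on_subset compact_Times)
  then obtain \<eta> where \<eta>: "\<eta> > 0"
    "\<And>p q. p \<in> {0..1} \<times> {0..1} \<Longrightarrow> q \<in> {0..1} \<times> {0..1} \<Longrightarrow> dist q p < \<eta> \<Longrightarrow> dist (G q) (G p) < e/2"
    using e unfolding uniformly_continuous_on_def by (meson half_gt_zero)
  obtain S where S: "S \<ge> 0" "tail_mass l S < e/4"
    using tail_mass_small[of l "e/4"] l e by (auto simp: kernel_def)
  show "\<exists>S\<ge>0. \<exists>\<eta>>0. \<forall>U\<in>C01. \<forall>V\<in>C01. \<forall>t. (\<forall>y. \<bar>y\<bar> \<le> \<bar>t\<bar> + S \<longrightarrow> dist (U y) (V y) < \<eta>)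
      \<longrightarrow> dist (convolve (\<lambda>y. G (U y)) l t) (convolve (\<lambda>y. G (V y)) l t) \<le> e"
  proof (rule exI[of _ S], intro conjI exI[of _ \<eta>] ballI allI impI)
    show "S \<ge> 0" "\<eta> > 0" using S(1) \<eta>(1) .
    fix U V t assume U: "U \<in> C01" and V: "V \<in> C01"
      and close: "\<forall>y. \<bar>y\<bar> \<le> \<bar>t\<bar> + S \<longrightarrow> dist (U y) (V y) < \<eta>"
    have "\<bar>G (U y) - G (V y)\<bar> \<le> e/2" if "\<bar>t - y\<bar> \<le> S" for y
    proof -
      have "dist (V y) (U y) < \<eta>" using close that by (simp add: dist_commute)
      then have "dist (G (V y)) (G (U y)) < e/2"
        using \<eta>(2) C01_unit_square[OF U] C01_unit_square[OF V] by blast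
      then show ?thesis by (simp add: dist_real_def abs_minus_commute)
    qed
    then have "\<bar>convolve (\<lambda>y. G (U y)) l t - convolve (\<lambda>y. G (V y)) l t\<bar> \<le> e/2 + 2 * tail_mass l S"
      using e C01_unit_square[OF U] C01_unit_square[OF V]
      by (intro convolve_diff_le_local[OF l measurable_comp_C01[OF U G(1)] _ measurable_comp_C01[OF V G(1)]])
         (auto intro: G(2))
    then show "dist (convolve (\<lambda>y. G (U y)) l t) (convolve (\<lambda>y. G (V y)) l t) \<le> e"
      using S(2) by (simp add: dist_real_def)
  qed
qed

locale competition_kernels =
  fixes r1 r2 a1 a2 :: real and l1 l2 :: "real \<Rightarrow> real"
  assumes r1: "0 < r1" "r1 < 1" and r2: "0 < r2" "r2 < 1" and a1: "1 < a1" and a2: "1 < a2"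
    and k1: "kernel l1" and k2: "kernel l2"
begin

lemma Qmap_eq: "Qmap r1 r2 a1 a2 l1 l2 =
    (\<lambda>U t. (1 - convolve (\<lambda>y. G1 r1 a1 (U y)) l1 t, convolve (\<lambda>y. G2 r2 a2 (U y)) l2 t))"
  by (simp add: Qmap_def convolve_def G1_def G2_def fun_eq_iff)

lemma G1_unit_square:
  assumes "p \<in> {0..1} \<times> {0..1}"
  shows "0 \<le> G1 r1 a1 p \<and> G1 r1 a1 p \<le> 1" "\<bar>G1 r1 a1 p\<bar> \<le> 1"
  using G1_unit_interval[OF _ _ assms, of r1 a1] r1 a1 by auto

lemma G2_unit_square:
  assumes "p \<in> {0..1} \<times> {0..1}"
  shows "0 \<le> G2 r2 a2 p \<and> G2 r2 a2 p \<le> 1" "\<bar>G2 r2 a2 p\<bar> \<le> 1"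
  using G2_unit_interval[OF _ _ assms, of r2 a2] r2 a2 by auto

lemma G1_comp_C01:
  assumes "U \<in> C01"
  shows "(\<lambda>y. G1 r1 a1 (U y)) \<in> borel_measurable lebesgue"
    and "0 \<le> G1 r1 a1 (U y) \<and> G1 r1 a1 (U y) \<le> 1" "\<bar>G1 r1 a1 (U y)\<bar> \<le> 1"
  using measurable_comp_C01[OF assms continuous_on_G1] G1_unit_square[OF C01_unit_square[OF assms]]
  by auto

lemma G2_comp_C01:
  assumes "U \<in> C01"
  shows "(\<lambda>y. G2 r2 a2 (U y)) \<in> borel_measurable lebesgue"
    and "0 \<le> G2 r2 a2 (U y) \<and> G2 r2 a2 (U y) \<le> 1" "\<bar>G2 r2 a2 (U y)\<bar> \<le> 1"
  using measurable_comp_C01[OF assms continuous_on_G2] G2_unit_square[OF C01_unit_square[OF assms]]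
  by auto

lemma Qmap_in_equicont_class:
  assumes U: "U \<in> C01"
  shows "Qmap r1 r2 a1 a2 l1 l2 U \<in> equicont_class (\<lambda>h. L1_modulus l1 h + L1_modulus l2 h)"
proof -
  have l1: "integrable lebesgue l1" and l2: "integrable lebesgue l2"
    using k1 k2 by (auto simp: kernel_def)
  have "Qmap r1 r2 a1 a2 l1 l2 U t \<in> {0..1} \<times> {0..1}" for t
    using convolve_unit_interval[OF k1 G1_comp_C01(1,2)[OF U], of t]
      convolve_unit_interval[OF k2 G2_comp_C01(1,2)[OF U], of t]
    by (auto simp: Qmap_eq mem_Times_iff)
  moreover have "dist (Qmap r1 r2 a1 a2 l1 l2 U (t + h)) (Qmap r1 r2 a1 a2 l1 l2 U t)
      \<le> L1_modulus l1 h + L1_modulus l2 h" for t h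
  proof -
    let ?c1 = "convolve (\<lambda>y. G1 r1 a1 (U y)) l1" and ?c2 = "convolve (\<lambda>y. G2 r2 a2 (U y)) l2"
    have "dist (Qmap r1 r2 a1 a2 l1 l2 U (t + h)) (Qmap r1 r2 a1 a2 l1 l2 U t)
        \<le> \<bar>?c1 (t + h) - ?c1 t\<bar> + \<bar>?c2 (t + h) - ?c2 t\<bar>"
      using norm_Pair_le[of "?c1 t - ?c1 (t + h)" "?c2 (t + h) - ?c2 t"]
      by (simp add: Qmap_eq dist_norm abs_minus_commute)
    also have "\<dots> \<le> L1_modulus l1 h + L1_modulus l2 h"
      using convolve_translate_le[OF l1 G1_comp_C01(1,3)[OF U], of t h]
        convolve_translate_le[OF l2 G2_comp_C01(1,3)[OF U], of t h] by linarith
    finally show ?thesis .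
  qed
  ultimately show ?thesis by (simp add: equicont_class_def image_subset_iff)
qed

lemma Qmap_locally_determined: "locally_determined (Qmap r1 r2 a1 a2 l1 l2) C01"
  unfolding Qmap_eq
  by (intro locally_determined_Pair locally_determined_const_diff locally_determined_convolve_comp
      k1 k2 continuous_on_G1 continuous_on_G2 G1_unit_square(2) G2_unit_square(2))

lemma Qmap_mono:
  assumes \<Phi>: "\<Phi> \<in> C01" and \<Psi>: "\<Psi> \<in> C01" and le: "fle \<Psi> \<Phi>"
  shows "fle (Qmap r1 r2 a1 a2 l1 l2 \<Psi>) (Qmap r1 r2 a1 a2 l1 l2 \<Phi>)"
proof -
  have l1: "integrable lebesgue l1" "\<And>y. 0 \<le> l1 y" and l2: "integrable lebesgue l2" "\<And>y. 0 \<le> l2 y"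
    using k1 k2 by (auto simp: kernel_def)
  have le_y: "fst (\<Psi> y) \<le> fst (\<Phi> y)" "snd (\<Psi> y) \<le> snd (\<Phi> y)" for y
    using le by (auto simp: fle_def)
  have "convolve (\<lambda>y. G1 r1 a1 (\<Phi> y)) l1 t \<le> convolve (\<lambda>y. G1 r1 a1 (\<Psi> y)) l1 t" for t
    using r1 a1 le_y C01_unit_square[OF \<Phi>] C01_unit_square[OF \<Psi>]
    by (intro convolve_mono[OF l1 G1_comp_C01(1,3)[OF \<Phi>] G1_comp_C01(1,3)[OF \<Psi>]]
        G1_antimono) auto
  moreover have "convolve (\<lambda>y. G2 r2 a2 (\<Psi> y)) l2 t \<le> convolve (\<lambda>y. G2 r2 a2 (\<Phi> y)) l2 t" for t
    using r2 a2 le_y C01_unit_square[OF \<Phi>] C01_unit_square[OF \<Psi>]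
    by (intro convolve_mono[OF l2 G2_comp_C01(1,3)[OF \<Psi>] G2_comp_C01(1,3)[OF \<Phi>]]
        G2_mono) auto
  ultimately show ?thesis by (simp add: fle_def Qmap_eq)
qed

end

theorem lemma3:
  fixes r1 r2 a1 a2 :: real and l1 l2 :: "real \<Rightarrow> real"
  assumes "0 < r1" "r1 < 1" "0 < r2" "r2 < 1" "1 < a1" "1 < a2"
    and "kernel l1" "kernel l2"
  defines "Q \<equiv> Qmap r1 r2 a1 a2 l1 l2"
  shows "Q ` C01 \<subseteq> C01 \<and>
         continuous_map (subtopology compact_open C01) (subtopology compact_open C01) Q \<and>
         (\<forall>\<Phi>\<in>C01. \<forall>\<Psi>\<in>C01. fle \<Psi> \<Phi> \<longrightarrow> fle (Q \<Psi>) (Q \<Phi>)) \<and>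
         compactin compact_open (compact_open closure_of (Q ` C01))"
proof -
  interpret competition_kernels r1 r2 a1 a2 l1 l2
    using assms(1-8) by unfold_locales
  define W where "W h = L1_modulus l1 h + L1_modulus l2 h" for h
  have W: "vanishes_at_0 W"
    unfolding W_def using assms(7,8)
    by (intro vanishes_at_0_add vanishes_at_0_L1_modulus) (auto simp: kernel_def)
  have QW: "Q ` C01 \<subseteq> equicont_class W"
    using Qmap_in_equicont_class by (auto simp: Q_def W_def[abs_def])
  have maps: "Q ` C01 \<subseteq> C01"
    using QW equicont_class_subset_C01[OF W] by blast
  have cont: "continuous_map (subtopology CO.mtopology C01) (subtopology CO.mtopology C01) Q"
    using maps Qmap_locally_determined unfolding Q_def
    by (intro continuous_map_if_locally_determined) (auto simp: C01_def)
  have "compactin CO.mtopology (CO.mtopology closure_of (Q ` C01))"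
  proof (rule closed_compactin[OF compactin_equicont_class[OF W]])
    show "CO.mtopology closure_of (Q ` C01) \<subseteq> equicont_class W"
      using QW compactin_imp_closedin[OF CO.Hausdorff_space_mtopology compactin_equicont_class[OF W]]
      by (rule closure_of_minimal)
  qed simp
  then show ?thesis
    unfolding compact_open_eq_mtopology using maps cont Qmap_mono by (auto simp: Q_def)
qed

end
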